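(* Let there be $H$ experts and $K \ge 2$ class labels. Let $x$ be drawn from a distribution $p(x)$, and for each $x$ let each expert assign a label to $x$, producing a vote profile with consensus label $y_*$ (the label receiving the most votes) and consensus set size $n_c$ (the number of experts voting for $y_*$); let $p(n_c)$ denote the induced distribution of $n_c$. Assume: (1) $p(n_c) = 0$ for every $n_c \le \lfloor H/2 \rfloor$ (i.e., the consensus is always a strict majority); (2) for every $x$, all $H - n_c$ experts not voting for $y_*$ vote for one and the same label $k \neq y_*$. Let $n_q$ be an odd integer with $1 \le n_q \le H$. For each $x$, select $n_q$ experts uniformly at random without replacement and predict $\hat y_*$ as the most frequent label among their votes. Let $Err$ be the probability, averaged over $x \sim p$ and the random selection, that $\hat y_* \ne y_*$. Then \[ Err = \sum_{n_c} p(n_c)\, Err_{n_c}, \qquad Err_{n_c} = F_{HG}\!\left(\left\lfloor \tfrac{n_q}{2} \right\rfloor; H, n_c, n_q\right), \] where $F_{HG}(r; H, n_c, n_q) = \sum_{j=0}^{r} \binom{n_c}{j}\binom{H-n_c}{n_q-j} \big/ \binom{H}{n_q}$ is the cumulative distribution function of the hypergeometric distribution for the number of consensus-set experts obtained when drawing $n_q$ experts without replacement from $H$ experts of which $n_c$ are in the consensus set.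
   Context: The consensus set for an example $x$ is the set of experts whose label equals the consensus label $y_*$; $n_c$ is its size. Binomial coefficients $\binom{a}{b}$ are taken to be $0$ when $b<0$ or $b>a$. *)

theory Defs
  imports "HOL-Probability.Probability"
begin

text \<open>Experts are 0..H-1, labels are 0..K-1. A vote profile is a function
  v :: nat => nat mapping each expert to its label.\<close>

definition votecount :: "(nat \<Rightarrow> nat) \<Rightarrow> nat set \<Rightarrow> nat \<Rightarrow> nat" where
  "votecount v S y = card {h \<in> S. v h = y}"

text \<open>A most frequent label among the votes of the experts in S
  (ties broken arbitrarily).\<close>
definition mode_label :: "nat \<Rightarrow> (nat \<Rightarrow> nat) \<Rightarrow> nat set \<Rightarrow> nat" where
  "mode_label K v S = (SOME y. y < K \<and> (\<forall>y'<K. votecount v S y' \<le> votecount v S y))"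

definition consensus_label :: "nat \<Rightarrow> nat \<Rightarrow> (nat \<Rightarrow> nat) \<Rightarrow> nat" where
  "consensus_label H K v = mode_label K v {..<H}"

definition consensus_size :: "nat \<Rightarrow> nat \<Rightarrow> (nat \<Rightarrow> nat) \<Rightarrow> nat" where
  "consensus_size H K v = votecount v {..<H} (consensus_label H K v)"

definition expert_subsets :: "nat \<Rightarrow> nat \<Rightarrow> nat set set" where
  "expert_subsets H nq = {S. S \<subseteq> {..<H} \<and> card S = nq}"

definition F_HG :: "nat \<Rightarrow> nat \<Rightarrow> nat \<Rightarrow> nat \<Rightarrow> real" where
  "F_HG r H nc nq =
     (\<Sum>j=0..r. real (nc choose j) * real ((H - nc) choose (nq - j))) / real (H choose nq)"

definition Err :: "nat \<Rightarrow> nat \<Rightarrow> nat \<Rightarrow> 'a pmf \<Rightarrow> ('a \<Rightarrow> nat \<Rightarrow> nat) \<Rightarrow> real" where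
  "Err H K nq p votes =
     measure_pmf.expectation p (\<lambda>x.
       measure_pmf.prob (pmf_of_set (expert_subsets H nq))
         {S. mode_label K (votes x) S \<noteq> consensus_label H K (votes x)})"

end

theory Submission
  imports Defs
begin

text \<open>Under the two-label hypothesis a sample of odd size n_q contains only votes for the
  consensus label y_* and for one other label k, so it has no tie, and its mode differs from
  y_* exactly when at most floor(n_q/2) of the sampled experts lie in the consensus set.
  For a uniformly random n_q-subset of the H experts this number is hypergeometric, so the
  error for a fixed x is F_HG(floor(n_q/2); H, n_c, n_q), which depends on x only through
  n_c; averaging over x then groups the examples by n_c.\<close>

lemma card_subsets_card_Int_eq:
  assumes "finite U" and "C \<subseteq> U" and "j \<le> m"
  shows "card {S. S \<subseteq> U \<and> card S = m \<and> card (S \<inter> C) = j}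
       = (card C choose j) * ((card U - card C) choose (m - j))"
proof -
  define B where "B = U - C"
  have fin: "finite C" "finite B"
    using assms finite_subset unfolding B_def by auto
  have cB: "card B = card U - card C"
    unfolding B_def using assms by (simp add: card_Diff_subset finite_subset)
  let ?P = "{X. X \<subseteq> C \<and> card X = j}"
  let ?Q = "{Y. Y \<subseteq> B \<and> card Y = m - j}"
  let ?union = "\<lambda>(X, Y). X \<union> Y"
  have "{S. S \<subseteq> U \<and> card S = m \<and> card (S \<inter> C) = j} = ?union ` (?P \<times> ?Q)"
  proof (intro equalityI subsetI)
    fix S assume "S \<in> {S. S \<subseteq> U \<and> card S = m \<and> card (S \<inter> C) = j}"
    hence S: "S \<subseteq> U" "card S = m" "card (S \<inter> C) = j" by auto
    have "card S = card (S \<inter> C) + card (S \<inter> B)"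
      using S(1) fin by (subst card_Un_disjoint[symmetric]) (auto simp: B_def intro: arg_cong[where f = card])
    with S show "S \<in> ?union ` (?P \<times> ?Q)"
      by (intro image_eqI[of _ _ "(S \<inter> C, S \<inter> B)"]) (auto simp: B_def)
  next
    fix S assume "S \<in> ?union ` (?P \<times> ?Q)"
    then obtain X Y where XY: "X \<subseteq> C" "card X = j" "Y \<subseteq> B" "card Y = m - j" "S = X \<union> Y"
      by auto
    have "finite X" "finite Y" "X \<inter> Y = {}"
      using XY(1,3) fin finite_subset[of X C] finite_subset[of Y B] by (auto simp: B_def)
    hence "card S = m" using XY assms(3) by (simp add: card_Un_disjoint)
    moreover have "S \<inter> C = X" using XY by (auto simp: B_def)
    ultimately show "S \<in> {S. S \<subseteq> U \<and> card S = m \<and> card (S \<inter> C) = j}"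
      using XY assms(2) by (auto simp: B_def)
  qed
  moreover have "inj_on ?union (?P \<times> ?Q)"
  proof (rule inj_onI, clarsimp)
    fix X Y X' Y' assume "X \<subseteq> C" "Y \<subseteq> B" "X' \<subseteq> C" "Y' \<subseteq> B" "X \<union> Y = X' \<union> Y'"
    then show "X = X' \<and> Y = Y'" unfolding B_def by blast
  qed
  ultimately show ?thesis
    using n_subsets[OF fin(1)] n_subsets[OF fin(2)] cB by (simp add: card_image card_cartesian_product)
qed

lemma card_expert_subsets: "card (expert_subsets H m) = H choose m"
  unfolding expert_subsets_def using n_subsets[of "{..<H}" m] by simp

lemma finite_expert_subsets: "finite (expert_subsets H m)"
  unfolding expert_subsets_def by (rule finite_subset[of _ "Pow {..<H}"]) auto

lemma expert_subsets_nonempty: "m \<le> H \<Longrightarrow> expert_subsets H m \<noteq> {}"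
  using card_expert_subsets[of H m] by (metis card.empty binomial_eq_0_iff not_less)

lemma prob_expert_subsets_card_Int_le:
  assumes "C \<subseteq> {..<H}" and "m \<le> H" and "r \<le> m"
  shows "measure_pmf.prob (pmf_of_set (expert_subsets H m)) {S. card (S \<inter> C) \<le> r}
       = F_HG r H (card C) m"
proof -
  let ?E = "expert_subsets H m"
  let ?layer = "\<lambda>j. {S. S \<subseteq> {..<H} \<and> card S = m \<and> card (S \<inter> C) = j}"
  have "measure_pmf.prob (pmf_of_set ?E) {S. card (S \<inter> C) \<le> r}
      = real (card (?E \<inter> {S. card (S \<inter> C) \<le> r})) / real (H choose m)"
    using expert_subsets_nonempty[OF assms(2)]
    by (simp add: measure_pmf_of_set finite_expert_subsets card_expert_subsets)
  also have "?E \<inter> {S. card (S \<inter> C) \<le> r} = (\<Union>j\<in>{0..r}. ?layer j)"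
    unfolding expert_subsets_def by auto
  also have "card \<dots> = (\<Sum>j=0..r. card (?layer j))"
    by (rule card_UN_disjoint) (auto intro: finite_subset[of _ "Pow {..<H}"])
  also have "\<dots> = (\<Sum>j=0..r. (card C choose j) * ((H - card C) choose (m - j)))"
    using assms by (intro sum.cong refl) (simp add: card_subsets_card_Int_eq)
  finally show ?thesis unfolding F_HG_def by simp
qed

lemma mode_label_spec:
  assumes "K > 0"
  shows "mode_label K v S < K" and "y < K \<Longrightarrow> votecount v S y \<le> votecount v S (mode_label K v S)"
proof -
  have "Max (votecount v S ` {..<K}) \<in> votecount v S ` {..<K}"
    using assms by (intro Max_in) auto
  then obtain y0 where "y0 < K" "votecount v S y0 = Max (votecount v S ` {..<K})"
    by auto
  hence "\<exists>y. y < K \<and> (\<forall>y'<K. votecount v S y' \<le> votecount v S y)"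
    by (metis Max_ge finite_imageI finite_lessThan image_eqI lessThan_iff)
  hence "mode_label K v S < K \<and> (\<forall>y'<K. votecount v S y' \<le> votecount v S (mode_label K v S))"
    unfolding mode_label_def by (rule someI_ex)
  thus "mode_label K v S < K" and "y < K \<Longrightarrow> votecount v S y \<le> votecount v S (mode_label K v S)"
    by auto
qed

lemma votecount_add_le_card:
  assumes "y \<noteq> z" and "finite S"
  shows "votecount v S y + votecount v S z \<le> card S"
proof -
  have "votecount v S y + votecount v S z = card ({h \<in> S. v h = y} \<union> {h \<in> S. v h = z})"
    unfolding votecount_def using assms by (subst card_Un_disjoint) auto
  also have "\<dots> \<le> card S" using assms by (intro card_mono) auto
  finally show ?thesis .
qed

lemma mode_label_two_labels_iff:
  assumes "K > 0" and labels: "\<forall>h\<in>S. v h < K" and "k \<noteq> y"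
    and two_labels: "\<forall>h\<in>S. v h \<noteq> y \<longrightarrow> v h = k"
    and "finite S" and "odd (card S)"
  shows "mode_label K v S \<noteq> y \<longleftrightarrow> votecount v S y \<le> card S div 2"
proof
  assume wrong: "mode_label K v S \<noteq> y"
  have "votecount v S y \<le> votecount v S (mode_label K v S)"
  proof (cases "y < K")
    case True
    with mode_label_spec[OF \<open>K > 0\<close>] show ?thesis by blast
  next
    case False
    with labels have "{h \<in> S. v h = y} = {}" by auto
    thus ?thesis unfolding votecount_def by (metis card.empty le0)
  qed
  moreover have "votecount v S y + votecount v S (mode_label K v S) \<le> card S"
    using votecount_add_le_card[OF wrong[symmetric] \<open>finite S\<close>] by simp
  ultimately show "votecount v S y \<le> card S div 2" by linarith
next
  assume few: "votecount v S y \<le> card S div 2"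
  have "{h \<in> S. v h = k} = S - {h \<in> S. v h = y}" using two_labels \<open>k \<noteq> y\<close> by auto
  hence "votecount v S k = card S - votecount v S y"
    unfolding votecount_def using \<open>finite S\<close> by (simp add: card_Diff_subset)
  with few \<open>odd (card S)\<close> have more: "votecount v S y < votecount v S k" by presburger
  then obtain h where "h \<in> S" "v h = k"
    unfolding votecount_def by (metis (mono_tags, lifting) Collect_empty_eq card.empty not_less0)
  with labels have "k < K" by auto
  with more mode_label_spec(2)[OF \<open>K > 0\<close>, of k v S] show "mode_label K v S \<noteq> y" by auto
qed

lemma prob_mode_label_ne_consensus_label:
  assumes "K > 0" and labels: "\<forall>h<H. v h < K" and "odd m" and "m \<le> H"
    and "k \<noteq> consensus_label H K v"
    and two_labels: "\<forall>h<H. v h \<noteq> consensus_label H K v \<longrightarrow> v h = k"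
  shows "measure_pmf.prob (pmf_of_set (expert_subsets H m))
           {S. mode_label K v S \<noteq> consensus_label H K v}
         = F_HG (m div 2) H (consensus_size H K v) m"
proof -
  let ?E = "expert_subsets H m"
  define C where "C = {h \<in> {..<H}. v h = consensus_label H K v}"
  have "S \<in> {S. mode_label K v S \<noteq> consensus_label H K v} \<longleftrightarrow> S \<in> {S. card (S \<inter> C) \<le> m div 2}"
    if "S \<in> set_pmf (pmf_of_set ?E)" for S
  proof -
    have S: "S \<subseteq> {..<H}" "card S = m" "finite S"
      using that finite_subset expert_subsets_nonempty[OF \<open>m \<le> H\<close>] finite_expert_subsets
      unfolding expert_subsets_def by auto
    have "votecount v S (consensus_label H K v) = card (S \<inter> C)"
      unfolding votecount_def C_def using S by (intro arg_cong[where f = card]) auto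
    with S show ?thesis
      using mode_label_two_labels_iff[OF \<open>K > 0\<close> _ \<open>k \<noteq> _\<close>, of S v] labels two_labels \<open>odd m\<close>
      by auto
  qed
  hence "measure_pmf.prob (pmf_of_set ?E) {S. mode_label K v S \<noteq> consensus_label H K v}
      = measure_pmf.prob (pmf_of_set ?E) {S. card (S \<inter> C) \<le> m div 2}"
    by (intro measure_pmf.finite_measure_eq_AE AE_pmfI) auto
  also have "\<dots> = F_HG (m div 2) H (card C) m"
    using \<open>m \<le> H\<close> by (intro prob_expert_subsets_card_Int_le) (auto simp: C_def)
  finally show ?thesis unfolding consensus_size_def votecount_def C_def by simp
qed

lemma consensus_size_le: "consensus_size H K v \<le> H"
  unfolding consensus_size_def votecount_def
  using card_mono[of "{..<H}" "{h \<in> {..<H}. v h = consensus_label H K v}"] by auto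

theorem lemma2:
  fixes H K nq :: nat and p :: "'a pmf" and votes :: "'a \<Rightarrow> nat \<Rightarrow> nat"
  assumes K2: "K \<ge> 2"
    and labels: "\<forall>x h. h < H \<longrightarrow> votes x h < K"
    and majority: "\<forall>n\<le>H div 2.
          pmf (map_pmf (\<lambda>x. consensus_size H K (votes x)) p) n = 0"
    and two_labels: "\<forall>x\<in>set_pmf p. \<exists>k. k \<noteq> consensus_label H K (votes x) \<and>
          (\<forall>h<H. votes x h \<noteq> consensus_label H K (votes x) \<longrightarrow> votes x h = k)"
    and nq_odd: "odd nq" and nq_ge: "1 \<le> nq" and nq_le: "nq \<le> H"
  shows "Err H K nq p votes =
    (\<Sum>n\<le>H. pmf (map_pmf (\<lambda>x. consensus_size H K (votes x)) p) n * F_HG (nq div 2) H n nq)"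
proof -
  let ?nc = "\<lambda>x. consensus_size H K (votes x)"
  let ?F = "\<lambda>n. F_HG (nq div 2) H n nq"
  have "Err H K nq p votes = measure_pmf.expectation p (\<lambda>x. ?F (?nc x))"
    unfolding Err_def
  proof (intro integral_cong_AE AE_pmfI)
    fix x assume "x \<in> set_pmf p"
    with two_labels obtain k where "k \<noteq> consensus_label H K (votes x)"
      "\<forall>h<H. votes x h \<noteq> consensus_label H K (votes x) \<longrightarrow> votes x h = k" by blast
    with K2 labels nq_odd nq_le
    show "measure_pmf.prob (pmf_of_set (expert_subsets H nq))
           {S. mode_label K (votes x) S \<noteq> consensus_label H K (votes x)} = ?F (?nc x)"
      by (intro prob_mode_label_ne_consensus_label) auto
  qed auto
  also have "\<dots> = measure_pmf.expectation (map_pmf ?nc p) ?F" by simp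
  also have "\<dots> = (\<Sum>n\<le>H. pmf (map_pmf ?nc p) n *\<^sub>R ?F n)"
    by (rule integral_measure_pmf) (auto simp: consensus_size_le)
  finally show ?thesis by simp
qed

end
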